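(* Let $\xi\in G$ and let $b\in Z^1(G,\pi_p)$ satisfy $b(\xi)=0$. (1) If $\xi$ is $\pi_p$-bounded, then $b(h)=0$ for all $h\in U_\xi$. (2) If $\xi$ is $\pi_p$-contracting, then $b(h)=0$ for all $h\in P_\xi$. (3) If $\xi$ is $\pi_p$-bounded, then $b(h)=0$ for all $h\in Z_\xi$.
   Context: $G$ is a locally compact second countable group with left Haar measure; $(\pi_0,V)$ is a continuous representation of $G$ on a separable Banach space $V$; for $p>1$, $\pi_p$ acts on the Bochner space $L^p(G,V)$ by $(\pi(g)f)(h)=\pi_0(g)(f(hg))$. $Z^1(G,\pi_p)$ is the space of continuous $b:G\to L^p(G,V)$ with $b(gh)=b(g)+\pi(g)b(h)$. $\xi$ is $\pi_p$-contracting if $\lim_n|||\pi(\xi^n)|||_{L^p(G,V)}=0$, and $\pi_p$-bounded if $\{\xi^n:n>0\}$ is not relatively compact and $\sup_{n>0}|||\pi(\xi^n)|||<\infty$. Define $U_\xi=\{h\in G:\xi^{-n}h\xi^n\to 1_G \text{ as } n\to+\infty\}$, $P_\xi=\{h\in G:(\xi^{-n}h\xi^n)_{n>0}\text{ is bounded (relatively compact)}\}$, $Z_\xi=\{h\in G:\xi^{-1}h\xi=h\}$. *)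

theory Defs
  imports "HOL-Analysis.Analysis" "HOL-Algebra.Group"
begin

text \<open>The group G is modelled as a HOL-Algebra group whose carrier is the whole
  type 'g; the topology of G is the topology of the type 'g.\<close>

definition lcsc_group :: "('g::{t2_space,second_countable_topology}) monoid \<Rightarrow> bool" where
  "lcsc_group G \<longleftrightarrow> group G \<and> carrier G = UNIV
     \<and> continuous_on UNIV (\<lambda>z::'g \<times> 'g. fst z \<otimes>\<^bsub>G\<^esub> snd z)
     \<and> continuous_on UNIV (\<lambda>x. inv\<^bsub>G\<^esub> x)
     \<and> (\<forall>x::'g. \<exists>U K. open U \<and> compact K \<and> x \<in> U \<and> U \<subseteq> K)"

text \<open>Left Haar measure (Radon-ness is automatic for Borel measures finite on
  compacts on an lcsc space).\<close>
definition left_haar :: "('g::{t2_space,second_countable_topology}) monoid \<Rightarrow> 'g measure \<Rightarrow> bool" where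
  "left_haar G \<mu> \<longleftrightarrow> sets \<mu> = sets borel
     \<and> (\<forall>g A. A \<in> sets borel \<longrightarrow> emeasure \<mu> ((\<lambda>x. g \<otimes>\<^bsub>G\<^esub> x) ` A) = emeasure \<mu> A)
     \<and> (\<forall>K. compact K \<longrightarrow> emeasure \<mu> K < \<infinity>)
     \<and> (\<forall>U. open U \<and> U \<noteq> {} \<longrightarrow> emeasure \<mu> U > 0)"

definition cont_rep :: "'g monoid \<Rightarrow> ('g::topological_space \<Rightarrow> ('v::real_normed_vector \<Rightarrow>\<^sub>L 'v)) \<Rightarrow> bool" where
  "cont_rep G \<pi>0 \<longleftrightarrow> (\<forall>g h. \<pi>0 (g \<otimes>\<^bsub>G\<^esub> h) = \<pi>0 g o\<^sub>L \<pi>0 h)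
     \<and> \<pi>0 \<one>\<^bsub>G\<^esub> = id_blinfun
     \<and> (\<forall>v. continuous_on UNIV (\<lambda>g. blinfun_apply (\<pi>0 g) v))"

text \<open>Bochner space L^p(G,V): representatives (equality is a.e. equality).\<close>
definition Lp :: "'g measure \<Rightarrow> real \<Rightarrow> ('g \<Rightarrow> 'v::{banach,second_countable_topology}) set" where
  "Lp \<mu> p = {f. f \<in> borel_measurable \<mu> \<and> integrable \<mu> (\<lambda>x. norm (f x) powr p)}"

definition Lpnorm :: "'g measure \<Rightarrow> real \<Rightarrow> ('g \<Rightarrow> 'v::{banach,second_countable_topology}) \<Rightarrow> real" where
  "Lpnorm \<mu> p f = (\<integral>x. norm (f x) powr p \<partial>\<mu>) powr (1/p)"

definition piL :: "'g monoid \<Rightarrow> ('g \<Rightarrow> ('v::real_normed_vector \<Rightarrow>\<^sub>L 'v)) \<Rightarrow> 'g \<Rightarrow> ('g \<Rightarrow> 'v) \<Rightarrow> ('g \<Rightarrow> 'v)" where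
  "piL G \<pi>0 g f = (\<lambda>h. blinfun_apply (\<pi>0 g) (f (h \<otimes>\<^bsub>G\<^esub> g)))"

definition opnorm_Lp :: "'g monoid \<Rightarrow> 'g measure \<Rightarrow> ('g \<Rightarrow> ('v::{banach,second_countable_topology} \<Rightarrow>\<^sub>L 'v)) \<Rightarrow> real \<Rightarrow> 'g \<Rightarrow> ereal" where
  "opnorm_Lp G \<mu> \<pi>0 p g =
     (SUP f\<in>{f \<in> Lp \<mu> p. Lpnorm \<mu> p f \<le> 1}. ereal (Lpnorm \<mu> p (piL G \<pi>0 g f)))"

definition Z1 :: "'g monoid \<Rightarrow> 'g measure \<Rightarrow> ('g::topological_space \<Rightarrow> ('v::{banach,second_countable_topology} \<Rightarrow>\<^sub>L 'v)) \<Rightarrow> real \<Rightarrow> ('g \<Rightarrow> 'g \<Rightarrow> 'v) \<Rightarrow> bool" where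
  "Z1 G \<mu> \<pi>0 p b \<longleftrightarrow> (\<forall>g. b g \<in> Lp \<mu> p)
     \<and> (\<forall>g0. ((\<lambda>g. Lpnorm \<mu> p (\<lambda>h. b g h - b g0 h)) \<longlongrightarrow> 0) (at g0))
     \<and> (\<forall>g g'. AE h in \<mu>. b (g \<otimes>\<^bsub>G\<^esub> g') h = b g h + piL G \<pi>0 g (b g') h)"

definition contracting :: "'g monoid \<Rightarrow> 'g measure \<Rightarrow> ('g \<Rightarrow> ('v::{banach,second_countable_topology} \<Rightarrow>\<^sub>L 'v)) \<Rightarrow> real \<Rightarrow> 'g \<Rightarrow> bool" where
  "contracting G \<mu> \<pi>0 p \<xi> \<longleftrightarrow> (\<lambda>n::nat. opnorm_Lp G \<mu> \<pi>0 p (\<xi> [^]\<^bsub>G\<^esub> n)) \<longlonglongrightarrow> 0"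

definition pbounded :: "'g monoid \<Rightarrow> 'g measure \<Rightarrow> ('g::topological_space \<Rightarrow> ('v::{banach,second_countable_topology} \<Rightarrow>\<^sub>L 'v)) \<Rightarrow> real \<Rightarrow> 'g \<Rightarrow> bool" where
  "pbounded G \<mu> \<pi>0 p \<xi> \<longleftrightarrow> \<not> compact (closure {\<xi> [^]\<^bsub>G\<^esub> (n::nat) | n. n > 0})
     \<and> (SUP n\<in>{0::nat<..}. opnorm_Lp G \<mu> \<pi>0 p (\<xi> [^]\<^bsub>G\<^esub> n)) < \<infinity>"

definition U_set :: "'g monoid \<Rightarrow> 'g::topological_space \<Rightarrow> 'g set" where
  "U_set G \<xi> = {h. (\<lambda>n::nat. inv\<^bsub>G\<^esub> (\<xi> [^]\<^bsub>G\<^esub> n) \<otimes>\<^bsub>G\<^esub> h \<otimes>\<^bsub>G\<^esub> (\<xi> [^]\<^bsub>G\<^esub> n)) \<longlonglongrightarrow> \<one>\<^bsub>G\<^esub>}"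

definition P_set :: "'g monoid \<Rightarrow> 'g::topological_space \<Rightarrow> 'g set" where
  "P_set G \<xi> = {h. compact (closure {inv\<^bsub>G\<^esub> (\<xi> [^]\<^bsub>G\<^esub> n) \<otimes>\<^bsub>G\<^esub> h \<otimes>\<^bsub>G\<^esub> (\<xi> [^]\<^bsub>G\<^esub> n) | n::nat. n > 0})}"

definition Z_set :: "'g monoid \<Rightarrow> 'g \<Rightarrow> 'g set" where
  "Z_set G \<xi> = {h. inv\<^bsub>G\<^esub> \<xi> \<otimes>\<^bsub>G\<^esub> h \<otimes>\<^bsub>G\<^esub> \<xi> = h}"

end

theory Submission
  imports Defs
begin

text \<open>
  The cocycle identity together with \<open>b(\<xi>) = 0\<close> gives \<open>b(\<xi>\<^sup>n) = 0\<close> and hence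
  \<open>b(h) = \<pi>(\<xi>\<^sup>n) b(\<xi>\<^sup>-\<^sup>n h \<xi>\<^sup>n)\<close> for every \<open>n\<close>. For \<open>h \<in> U\<^sub>\<xi>\<close> the conjugates tend to \<open>1\<close>, so by
  continuity of \<open>b\<close> and \<open>b(1) = 0\<close> the norms of \<open>b(\<xi>\<^sup>-\<^sup>n h \<xi>\<^sup>n)\<close> tend to \<open>0\<close>, while
  \<open>\<pi>(\<xi>\<^sup>n)\<close> stays bounded. For \<open>h \<in> P\<^sub>\<xi>\<close> the conjugates stay in a compact set, on which
  the continuous cocycle is bounded, while \<open>\<pi>(\<xi>\<^sup>n)\<close> tends to \<open>0\<close>. For \<open>h \<in> Z\<^sub>\<xi>\<close> the
  vector \<open>f = b(h)\<close> is \<open>\<pi>(\<xi>\<^sup>n)\<close>-invariant. Almost all of the \<open>L\<^sup>p\<close>-mass of \<open>f\<close> lies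
  in a compact set \<open>K\<close>, and since the powers of \<open>\<xi>\<close> leave every compact set, some
  \<open>K \<xi>\<^sup>n\<close> is disjoint from \<open>K\<close>; then \<open>\<pi>(\<xi>\<^sup>n)\<close> moves the mass of \<open>f\<close> inside \<open>K\<close> to the
  small part of \<open>f\<close> outside \<open>K\<close>, and uniform boundedness forces \<open>f = 0\<close>.
\<close>

lemma powr_add_le_two_powr:
  fixes s t p :: real
  assumes "0 \<le> s" "0 \<le> t" "0 < p"
  shows "(s + t) powr p \<le> 2 powr p * (s powr p + t powr p)"
proof -
  have "(s + t) powr p \<le> (2 * max s t) powr p"
    by (rule powr_mono2) (use assms in auto)
  also have "\<dots> = 2 powr p * max s t powr p" by (simp add: powr_mult)
  also have "max s t powr p \<le> s powr p + t powr p"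
    by (cases "s \<le> t") (auto simp: max_def)
  hence "2 powr p * max s t powr p \<le> 2 powr p * (s powr p + t powr p)"
    by (intro mult_left_mono) auto
  finally show ?thesis .
qed

lemma compact_imp_bounded_above_if_locally_bounded_above:
  fixes f :: "'a::topological_space \<Rightarrow> real"
  assumes "compact C"
    and "\<And>x. x \<in> C \<Longrightarrow> \<exists>U B. open U \<and> x \<in> U \<and> (\<forall>y\<in>U. f y \<le> B)"
  obtains B where "\<And>x. x \<in> C \<Longrightarrow> f x \<le> B"
proof -
  obtain U B where UB: "\<And>x. x \<in> C \<Longrightarrow> open (U x) \<and> x \<in> U x \<and> (\<forall>y\<in>U x. f y \<le> B x)"
    using assms(2) by metis
  obtain C' where C': "C' \<subseteq> C" "finite C'" "C \<subseteq> (\<Union>x\<in>C'. U x)"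
    by (rule compactE_image[OF assms(1), of C U]) (use UB in blast)+
  have "f y \<le> (\<Sum>x\<in>C'. \<bar>B x\<bar>)" if "y \<in> C" for y
  proof -
    obtain x where x: "x \<in> C'" "y \<in> U x" using C'(3) \<open>y \<in> C\<close> by blast
    have "f y \<le> \<bar>B x\<bar>" using UB[of x] x C'(1) by force
    also have "\<dots> \<le> (\<Sum>x\<in>C'. \<bar>B x\<bar>)" by (rule member_le_sum) (use x(1) C'(2) in auto)
    finally show ?thesis .
  qed
  then show ?thesis using that by blast
qed

lemma Lpnorm_nonneg: "0 \<le> Lpnorm \<mu> p f"
  by (simp add: Lpnorm_def)

lemma Lpnorm_zero [simp]: "Lpnorm \<mu> p (\<lambda>x. 0) = 0"
  by (simp add: Lpnorm_def)

lemma integral_norm_powr_nonneg: "0 \<le> (\<integral>x. norm (f x) powr p \<partial>\<mu>)"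
  by (rule integral_nonneg_AE) auto

lemma Lpnorm_powr:
  assumes "0 < p"
  shows "Lpnorm \<mu> p f powr p = (\<integral>x. norm (f x) powr p \<partial>\<mu>)"
  using assms integral_norm_powr_nonneg[of \<mu> f p] by (simp add: Lpnorm_def powr_powr)

lemma Lpnorm_cong_AE:
  assumes "f \<in> borel_measurable \<mu>" "g \<in> borel_measurable \<mu>" "AE x in \<mu>. f x = g x"
  shows "Lpnorm \<mu> p f = Lpnorm \<mu> p g"
proof -
  have "(\<integral>x. norm (f x) powr p \<partial>\<mu>) = (\<integral>x. norm (g x) powr p \<partial>\<mu>)"
    by (rule integral_cong_AE) (use assms in auto)
  then show ?thesis by (simp add: Lpnorm_def)
qed

lemma Lpnorm_scaleR:
  assumes "0 < p"
  shows "Lpnorm \<mu> p (\<lambda>x. c *\<^sub>R f x) = \<bar>c\<bar> * Lpnorm \<mu> p f"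
  using assms integral_norm_powr_nonneg[of \<mu> f p]
  by (simp add: Lpnorm_def powr_mult powr_powr)

lemma Lp_scaleR: "f \<in> Lp \<mu> p \<Longrightarrow> (\<lambda>x. c *\<^sub>R f x) \<in> Lp \<mu> p"
  by (auto simp: Lp_def powr_mult)

lemma Lp_dominated:
  assumes f: "f \<in> Lp \<mu> p" and g: "g \<in> borel_measurable \<mu>"
    and le: "AE x in \<mu>. norm (g x) \<le> norm (f x)" and p: "0 < p"
  shows "g \<in> Lp \<mu> p"
proof -
  have "integrable \<mu> (\<lambda>x. norm (g x) powr p)"
  proof (rule Bochner_Integration.integrable_bound)
    show "integrable \<mu> (\<lambda>x. norm (f x) powr p)" using f by (simp add: Lp_def)
    show "AE x in \<mu>. norm (norm (g x) powr p) \<le> norm (norm (f x) powr p)"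
      using le by eventually_elim (use p in \<open>auto intro: powr_mono2\<close>)
  qed (use g in measurable)
  then show ?thesis using g by (simp add: Lp_def)
qed

lemma Lp_indicator:
  assumes "f \<in> Lp \<mu> p" "A \<in> sets \<mu>" "0 < p"
  shows "(\<lambda>x. indicator A x *\<^sub>R f x) \<in> Lp \<mu> p"
  by (rule Lp_dominated[OF assms(1)]) (use assms in \<open>auto simp: Lp_def indicator_def\<close>)

lemma integral_norm_add_powr_le:
  assumes f: "f \<in> Lp \<mu> p" and g: "g \<in> Lp \<mu> p" and p: "0 < p"
  shows "(\<lambda>x. f x + g x) \<in> Lp \<mu> p"
    and "(\<integral>x. norm (f x + g x) powr p \<partial>\<mu>)
           \<le> 2 powr p * ((\<integral>x. norm (f x) powr p \<partial>\<mu>) + (\<integral>x. norm (g x) powr p \<partial>\<mu>))"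
proof -
  have int: "integrable \<mu> (\<lambda>x. 2 powr p * (norm (f x) powr p + norm (g x) powr p))"
    using f g by (auto simp: Lp_def)
  have le: "norm (f x + g x) powr p \<le> 2 powr p * (norm (f x) powr p + norm (g x) powr p)" for x
  proof -
    have "norm (f x + g x) powr p \<le> (norm (f x) + norm (g x)) powr p"
      by (rule powr_mono2) (use p norm_triangle_ineq in auto)
    also have "\<dots> \<le> 2 powr p * (norm (f x) powr p + norm (g x) powr p)"
      by (rule powr_add_le_two_powr) (use p in auto)
    finally show ?thesis .
  qed
  have meas: "(\<lambda>x. f x + g x) \<in> borel_measurable \<mu>" using f g by (auto simp: Lp_def)
  have int_sum: "integrable \<mu> (\<lambda>x. norm (f x + g x) powr p)"
    by (rule Bochner_Integration.integrable_bound[OF int]) (use meas le in \<open>auto simp: abs_mult\<close>)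
  then show "(\<lambda>x. f x + g x) \<in> Lp \<mu> p" using meas by (simp add: Lp_def)
  have "(\<integral>x. norm (f x + g x) powr p \<partial>\<mu>)
          \<le> (\<integral>x. 2 powr p * (norm (f x) powr p + norm (g x) powr p) \<partial>\<mu>)"
    by (rule integral_mono[OF int_sum int le])
  also have "\<dots> = 2 powr p * ((\<integral>x. norm (f x) powr p \<partial>\<mu>) + (\<integral>x. norm (g x) powr p \<partial>\<mu>))"
    using f g by (simp add: Lp_def)
  finally show "(\<integral>x. norm (f x + g x) powr p \<partial>\<mu>)
           \<le> 2 powr p * ((\<integral>x. norm (f x) powr p \<partial>\<mu>) + (\<integral>x. norm (g x) powr p \<partial>\<mu>))" .
qed

lemma Lp_diff:
  assumes "f \<in> Lp \<mu> p" "g \<in> Lp \<mu> p" "0 < p"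
  shows "(\<lambda>x. f x - g x) \<in> Lp \<mu> p"
  using integral_norm_add_powr_le(1)[OF assms(1) Lp_scaleR[OF assms(2), of "-1"] assms(3)]
  by simp

lemma AE_eq_0_if_integral_norm_powr_eq_0:
  assumes "f \<in> Lp \<mu> p" "(\<integral>x. norm (f x) powr p \<partial>\<mu>) = 0"
  shows "AE x in \<mu>. f x = 0"
proof -
  have "AE x in \<mu>. norm (f x) powr p = 0"
    using assms integral_nonneg_eq_0_iff_AE[of \<mu> "\<lambda>x. norm (f x) powr p"]
    by (auto simp: Lp_def)
  then show ?thesis by eventually_elim simp
qed

lemma AE_eq_0_if_Lpnorm_le_0:
  assumes "f \<in> Lp \<mu> p" "Lpnorm \<mu> p f \<le> 0" "0 < p"
  shows "AE x in \<mu>. f x = 0"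
proof -
  have "Lpnorm \<mu> p f = 0" using assms(2) Lpnorm_nonneg[of \<mu> p f] by linarith
  then have "(\<integral>x. norm (f x) powr p \<partial>\<mu>) = 0" using Lpnorm_powr[OF assms(3), of \<mu> f] assms(3) by simp
  then show ?thesis using AE_eq_0_if_integral_norm_powr_eq_0 assms(1) by blast
qed

text \<open>\<open>opnorm_Lp\<close> is a supremum over the unit ball only; the bound for arbitrary \<open>f\<close>
  comes from rescaling \<open>f\<close> into the ball of radius \<open>1\<close> by every \<open>t > \<parallel>f\<parallel>\<^sub>p\<close>.\<close>

lemma Lpnorm_piL_le:
  fixes \<pi>0 :: "'g \<Rightarrow> ('v::{banach,second_countable_topology} \<Rightarrow>\<^sub>L 'v)"
  assumes M: "opnorm_Lp G \<mu> \<pi>0 p g \<le> ereal M" and f: "f \<in> Lp \<mu> p" and p: "0 < p"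
  shows "Lpnorm \<mu> p (piL G \<pi>0 g f) \<le> M * Lpnorm \<mu> p f"
proof -
  let ?B = "{f \<in> Lp \<mu> p. Lpnorm \<mu> p f \<le> 1}"
  have ball: "Lpnorm \<mu> p (piL G \<pi>0 g u) \<le> M" if "u \<in> ?B" for u
  proof -
    have "ereal (Lpnorm \<mu> p (piL G \<pi>0 g u)) \<le> opnorm_Lp G \<mu> \<pi>0 p g"
      unfolding opnorm_Lp_def by (rule SUP_upper) (use that in auto)
    then show ?thesis using M by (rule order.trans[THEN ereal_less_eq(3)[THEN iffD1]])
  qed
  have "(\<lambda>x. 0::'v) \<in> ?B" by (auto simp: Lp_def Lpnorm_def)
  from ball[OF this] have M0: "0 \<le> M" by (simp add: piL_def Lpnorm_def)
  define L where "L = Lpnorm \<mu> p f"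
  have L0: "0 \<le> L" unfolding L_def by (rule Lpnorm_nonneg)
  have scaled: "Lpnorm \<mu> p (piL G \<pi>0 g f) \<le> t * M" if "L < t" for t
  proof -
    have t0: "0 < t" using that L0 by linarith
    let ?u = "\<lambda>x. (1/t) *\<^sub>R f x"
    have "Lpnorm \<mu> p ?u \<le> 1" using t0 that by (simp add: Lpnorm_scaleR[OF p] L_def)
    then have "Lpnorm \<mu> p (piL G \<pi>0 g ?u) \<le> M" using Lp_scaleR[OF f] by (intro ball) auto
    moreover have "piL G \<pi>0 g ?u = (\<lambda>x. (1/t) *\<^sub>R piL G \<pi>0 g f x)"
      by (simp add: piL_def blinfun.scaleR_right)
    ultimately have "(1/t) * Lpnorm \<mu> p (piL G \<pi>0 g f) \<le> M"
      using t0 by (simp add: Lpnorm_scaleR[OF p])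
    then show ?thesis using t0 by (simp add: field_simps)
  qed
  show ?thesis
  proof (rule field_le_epsilon)
    fix e :: real assume e: "0 < e"
    have "Lpnorm \<mu> p (piL G \<pi>0 g f) \<le> (L + e/(M+1)) * M"
      using scaled[of "L + e/(M+1)"] e M0 by (simp add: add_pos_nonneg)
    also have "\<dots> \<le> L * M + e"
      using M0 e by (simp add: field_simps)
    finally show "Lpnorm \<mu> p (piL G \<pi>0 g f) \<le> M * Lpnorm \<mu> p f + e"
      by (simp add: mult.commute L_def)
  qed
qed

lemma pbounded_obtains_opnorm_bound:
  assumes "pbounded G \<mu> \<pi>0 p \<xi>"
  obtains M where "0 \<le> M" "\<And>n::nat. n > 0 \<Longrightarrow> opnorm_Lp G \<mu> \<pi>0 p (\<xi> [^]\<^bsub>G\<^esub> n) \<le> ereal M"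
proof -
  let ?S = "SUP n\<in>{0::nat<..}. opnorm_Lp G \<mu> \<pi>0 p (\<xi> [^]\<^bsub>G\<^esub> n)"
  obtain M where "?S \<le> ereal M"
    using assms by (cases ?S) (auto simp: pbounded_def)
  moreover have "opnorm_Lp G \<mu> \<pi>0 p (\<xi> [^]\<^bsub>G\<^esub> n) \<le> ?S" if "n > 0" for n :: nat
    by (rule SUP_upper) (use that in auto)
  ultimately have "opnorm_Lp G \<mu> \<pi>0 p (\<xi> [^]\<^bsub>G\<^esub> n) \<le> ereal (max M 0)" if "n > 0" for n :: nat
    using that by (meson ereal_less_eq(3) max.cobounded1 order_trans)
  then show ?thesis using that[of "max M 0"] by simp
qed

subsection \<open>Locally compact second countable groups with left Haar measure\<close>

locale lcsc_haar =
  fixes G :: "('g::{t2_space,second_countable_topology}) monoid" (structure)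
    and \<mu> :: "'g measure"
  assumes lcsc: "lcsc_group G" and haar: "left_haar G \<mu>"
begin

sublocale group G using lcsc unfolding lcsc_group_def by (elim conjE)

lemma carrier_eq_UNIV [simp]: "carrier G = UNIV"
  using lcsc unfolding lcsc_group_def by (elim conjE)

lemma sets_mu [simp, measurable_cong]: "sets \<mu> = sets borel"
  using haar unfolding left_haar_def by (elim conjE)

lemma space_mu [simp]: "space \<mu> = UNIV"
  using sets_eq_imp_space_eq[OF sets_mu] by simp

lemma emeasure_lmult_image: "A \<in> sets borel \<Longrightarrow> emeasure \<mu> ((\<lambda>x. g \<otimes> x) ` A) = emeasure \<mu> A"
  using haar unfolding left_haar_def by auto

lemma continuous_on_mult:
  assumes "continuous_on UNIV f" "continuous_on UNIV g"
  shows "continuous_on UNIV (\<lambda>x. f x \<otimes> g x)"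
proof -
  have "continuous_on UNIV (\<lambda>z::'g \<times> 'g. fst z \<otimes> snd z)"
    using lcsc unfolding lcsc_group_def by (elim conjE)
  from continuous_on_compose2[OF this continuous_on_Pair[OF assms]] show ?thesis by simp
qed

lemma continuous_on_inv:
  assumes "continuous_on UNIV f"
  shows "continuous_on UNIV (\<lambda>x. inv (f x))"
proof -
  have "continuous_on UNIV (\<lambda>x::'g. inv x)"
    using lcsc unfolding lcsc_group_def by (elim conjE)
  from continuous_on_compose2[OF this assms] show ?thesis by simp
qed

lemma borel_vimage_continuous:
  assumes "continuous_on UNIV f" "E \<in> sets borel"
  shows "f -` E \<in> sets borel"
  using measurable_sets[OF borel_measurable_continuous_onI[OF assms(1)] assms(2)] by simp

lemma measurable_rmult [measurable]:
  "f \<in> borel_measurable \<mu> \<Longrightarrow> (\<lambda>x. f (x \<otimes> g)) \<in> borel_measurable \<mu>"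
proof -
  have "(\<lambda>x. x \<otimes> g) \<in> measurable \<mu> \<mu>"
    using borel_measurable_continuous_onI[OF continuous_on_mult[OF continuous_on_id continuous_on_const]]
      measurable_cong_sets[OF sets_mu sets_mu] by simp
  then show "f \<in> borel_measurable \<mu> \<Longrightarrow> (\<lambda>x. f (x \<otimes> g)) \<in> borel_measurable \<mu>"
    using measurable_compose by blast
qed

lemma measurable_piL:
  assumes "f \<in> borel_measurable \<mu>"
  shows "piL G \<pi>0 g f \<in> borel_measurable \<mu>"
proof -
  have "continuous_on UNIV (blinfun_apply (\<pi>0 g))"
    by (rule linear_continuous_on) (rule blinfun.bounded_linear_right)
  from measurable_compose[OF measurable_rmult[OF assms] borel_measurable_continuous_onI[OF this]]
  show ?thesis by (simp add: piL_def)
qed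

lemma compact_exhaustion:
  obtains K :: "nat \<Rightarrow> 'g set" where "\<And>j. compact (K j)" "incseq K" "(\<Union>j. K j) = UNIV"
proof -
  define F where "F = {U::'g set. open U \<and> (\<exists>K. compact K \<and> U \<subseteq> K)}"
  have "x \<in> \<Union>F" for x
  proof -
    have "\<forall>x::'g. \<exists>U K. open U \<and> compact K \<and> x \<in> U \<and> U \<subseteq> K"
      using lcsc unfolding lcsc_group_def by (elim conjE)
    then obtain U K where "open U" "compact K" "x \<in> U" "U \<subseteq> K" by blast
    then show ?thesis unfolding F_def by blast
  qed
  then have "\<Union>F = UNIV" by blast
  moreover obtain F' where F': "F' \<subseteq> F" "countable F'" "\<Union>F' = \<Union>F"
    by (rule Lindelof[of F]) (simp add: F_def)
  ultimately have F'_cover: "\<Union>F' = UNIV" and F'_ne: "F' \<noteq> {}" by auto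
  have "\<exists>K. compact K \<and> U \<subseteq> K" if "U \<in> F" for U
    using that unfolding F_def by blast
  then obtain Kc where Kc: "\<And>U. U \<in> F \<Longrightarrow> compact (Kc U) \<and> U \<subseteq> Kc U"
    by metis
  define K where "K j = (\<Union>i\<le>j. Kc (from_nat_into F' i))" for j
  have in_F: "from_nat_into F' i \<in> F" for i
    using from_nat_into[OF F'_ne, of i] F'(1) by blast
  show ?thesis
  proof (rule that)
    show "compact (K j)" for j
      unfolding K_def using Kc[OF in_F] by (intro compact_UN) auto
    show "incseq K" unfolding K_def incseq_def by (intro allI impI UN_mono) auto
    have xK: "x \<in> K (to_nat_on F' U)" if U: "U \<in> F'" "x \<in> U" for x U
    proof -
      have "U \<in> F" using U(1) F'(1) by blast
      then have "x \<in> Kc (from_nat_into F' (to_nat_on F' U))"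
        using Kc U(2) by (simp add: from_nat_into_to_nat_on[OF F'(2) U(1)] subset_iff)
      then show ?thesis unfolding K_def by (intro UN_I[of "to_nat_on F' U"]) simp_all
    qed
    show "(\<Union>j. K j) = UNIV"
    proof (rule UNIV_eq_I[symmetric])
      fix x :: 'g
      have "x \<in> \<Union>F'" using F'_cover by simp
      then obtain U where "U \<in> F'" "x \<in> U" by (rule UnionE)
      from xK[OF this] show "x \<in> (\<Union>j. K j)" by (rule UN_I[OF UNIV_I])
    qed
  qed
qed

lemma sigma_finite: "sigma_finite_measure \<mu>"
proof -
  obtain K :: "nat \<Rightarrow> 'g set" where K: "\<And>j. compact (K j)" "incseq K" "(\<Union>j. K j) = UNIV"
    by (rule compact_exhaustion) blast
  have "\<forall>K. compact K \<longrightarrow> emeasure \<mu> K < \<infinity>"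
    using haar unfolding left_haar_def by (elim conjE)
  then have fin: "emeasure \<mu> (K j) \<noteq> \<infinity>" for j
    using K(1) by (simp add: less_top)
  show ?thesis unfolding sigma_finite_measure_def
  proof (intro exI[of _ "range K"] conjI ballI)
    show "range K \<subseteq> sets \<mu>" using K(1) by (auto intro: borel_closed compact_imp_closed)
    show "\<Union> (range K) = space \<mu>" using K(3) by simp
    show "A \<in> range K \<Longrightarrow> emeasure \<mu> A \<noteq> \<infinity>" for A using fin by blast
  qed simp
qed

lemma lmult_image_eq_vimage: "(\<lambda>x. g \<otimes> x) ` A = (\<lambda>x. inv g \<otimes> x) -` A"
  by (auto simp: m_assoc[symmetric] intro!: image_eqI[where x = "inv g \<otimes> _"])

text \<open>Inversion preserves null sets: with \<open>S = {(x, y). y\<^sup>-\<^sup>1 x \<in> E}\<close>, Tonelli computes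
  \<open>(\<mu> \<times> \<mu>)(S)\<close> once as \<open>\<mu>(E\<^sup>-\<^sup>1) \<mu>(G)\<close> and once as \<open>0\<close>, using only left invariance.\<close>

lemma emeasure_inv_vimage_eq_0:
  assumes E: "E \<in> sets borel" "emeasure \<mu> E = 0"
  shows "emeasure \<mu> ((\<lambda>x. inv x) -` E) = 0"
proof -
  interpret sf: sigma_finite_measure \<mu> by (rule sigma_finite)
  interpret pair_sigma_finite \<mu> \<mu> by (simp add: pair_sigma_finite_def sigma_finite)
  let ?Ei = "(\<lambda>x. inv x) -` E"
  have Ei: "?Ei \<in> sets borel"
    by (rule borel_vimage_continuous[OF continuous_on_inv[OF continuous_on_id] E(1)])
  define S where "S = (\<lambda>z. inv (snd z) \<otimes> fst z) -` E"
  have "S \<in> sets (borel :: ('g \<times> 'g) measure)" unfolding S_def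
    by (intro borel_vimage_continuous continuous_on_mult continuous_on_inv
        continuous_on_fst continuous_on_snd continuous_on_id E(1))
  moreover have "sets (\<mu> \<Otimes>\<^sub>M \<mu>) = sets (borel :: ('g \<times> 'g) measure)"
    using sets_pair_measure_cong[of \<mu> borel \<mu> borel] by (simp only: sets_mu borel_prod)
  ultimately have S: "S \<in> sets (\<mu> \<Otimes>\<^sub>M \<mu>)" by simp
  have "emeasure (\<mu> \<Otimes>\<^sub>M \<mu>) S = (\<integral>\<^sup>+ x. emeasure \<mu> (Pair x -` S) \<partial>\<mu>)"
    by (rule sf.emeasure_pair_measure_alt[OF S])
  also have "\<dots> = (\<integral>\<^sup>+ x. emeasure \<mu> ((\<lambda>y. x \<otimes> y) ` ?Ei) \<partial>\<mu>)"
    unfolding lmult_image_eq_vimage S_def vimage_def by (simp add: inv_mult_group)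
  also have "\<dots> = emeasure \<mu> ?Ei * emeasure \<mu> UNIV"
    using emeasure_lmult_image[OF Ei] by simp
  finally have "emeasure (\<mu> \<Otimes>\<^sub>M \<mu>) S = emeasure \<mu> ?Ei * emeasure \<mu> UNIV" .
  moreover have "emeasure (\<mu> \<Otimes>\<^sub>M \<mu>) S = (\<integral>\<^sup>+ y. emeasure \<mu> ((\<lambda>x. (x, y)) -` S) \<partial>\<mu>)"
    by (rule emeasure_pair_measure_alt2[OF S])
  moreover have "\<dots> = (\<integral>\<^sup>+ y. emeasure \<mu> ((\<lambda>x. y \<otimes> x) ` E) \<partial>\<mu>)"
    unfolding lmult_image_eq_vimage S_def vimage_def by simp
  moreover have "\<dots> = 0" using emeasure_lmult_image[OF E(1)] E(2) by simp
  moreover have "emeasure \<mu> UNIV > 0"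
    using haar unfolding left_haar_def by auto
  ultimately show ?thesis by (auto simp: mult_eq_0_iff)
qed

lemma emeasure_rmult_vimage_eq_0:
  assumes N: "N \<in> sets borel" "emeasure \<mu> N = 0"
  shows "emeasure \<mu> ((\<lambda>x. x \<otimes> g) -` N) = 0"
proof -
  let ?Ni = "(\<lambda>x. inv x) -` N"
  have Ni: "?Ni \<in> sets borel"
    by (rule borel_vimage_continuous[OF continuous_on_inv[OF continuous_on_id] N(1)])
  have gNi: "(\<lambda>x. g \<otimes> x) ` ?Ni \<in> sets borel" "emeasure \<mu> ((\<lambda>x. g \<otimes> x) ` ?Ni) = 0"
    using emeasure_lmult_image[OF Ni] emeasure_inv_vimage_eq_0[OF N] unfolding lmult_image_eq_vimage
    by (auto intro!: borel_vimage_continuous[OF _ Ni] continuous_on_mult continuous_on_const continuous_on_id)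
  have "(\<lambda>x. x \<otimes> g) -` N = (\<lambda>x. inv x) -` ((\<lambda>x. g \<otimes> x) ` ?Ni)"
    unfolding lmult_image_eq_vimage vimage_def by (simp add: inv_mult_group)
  then show ?thesis using emeasure_inv_vimage_eq_0[OF gNi] by simp
qed

lemma AE_rmult:
  assumes "AE x in \<mu>. P x"
  shows "AE x in \<mu>. P (x \<otimes> g)"
proof -
  from assms obtain N where N: "{x \<in> space \<mu>. \<not> P x} \<subseteq> N" "emeasure \<mu> N = 0" "N \<in> sets \<mu>"
    by (rule AE_E)
  show ?thesis
  proof (rule AE_I)
    show "{x \<in> space \<mu>. \<not> P (x \<otimes> g)} \<subseteq> (\<lambda>x. x \<otimes> g) -` N" using N(1) by auto
    show "emeasure \<mu> ((\<lambda>x. x \<otimes> g) -` N) = 0" using emeasure_rmult_vimage_eq_0 N by simp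
    show "(\<lambda>x. x \<otimes> g) -` N \<in> sets \<mu>"
      using N(3) by (simp add: borel_vimage_continuous continuous_on_mult continuous_on_const continuous_on_id)
  qed
qed

lemma Lp_tail_small:
  assumes f: "f \<in> Lp \<mu> p" and p: "0 < p" and e: "0 < e"
  obtains K where "compact K" "(\<integral>x. norm (indicator (-K) x *\<^sub>R f x) powr p \<partial>\<mu>) < e"
proof -
  obtain K :: "nat \<Rightarrow> 'g set" where K: "\<And>j. compact (K j)" "incseq K" "(\<Union>j. K j) = UNIV"
    by (rule compact_exhaustion) blast
  let ?tail = "\<lambda>j x. norm (indicator (-K j) x *\<^sub>R f x) powr p"
  have Ks: "-K j \<in> sets \<mu>" for j
    using K(1) by (simp add: borel_open open_Compl compact_imp_closed)
  have fm [measurable]: "f \<in> borel_measurable \<mu>" using f by (simp add: Lp_def)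
  have meas: "?tail j \<in> borel_measurable \<mu>" for j
    using Ks[of j] by measurable
  have bound: "AE x in \<mu>. norm (?tail j x) \<le> norm (f x) powr p" for j
    by (intro AE_I2) (simp add: indicator_def)
  have lim: "AE x in \<mu>. (\<lambda>j. ?tail j x) \<longlonglongrightarrow> 0"
  proof (rule AE_I2)
    fix x
    have "x \<in> (\<Union>j. K j)" using K(3) by simp
    then obtain j0 where "x \<in> K j0" by blast
    then have "\<forall>j\<ge>j0. ?tail j x = 0" using incseqD[OF K(2)] by fastforce
    then show "(\<lambda>j. ?tail j x) \<longlonglongrightarrow> 0"
      by (intro tendsto_eventually) (auto simp: eventually_sequentially)
  qed
  have "(\<lambda>j. \<integral>x. ?tail j x \<partial>\<mu>) \<longlonglongrightarrow> (\<integral>x. 0 \<partial>\<mu>)"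
    by (rule integral_dominated_convergence[OF _ meas _ lim bound]) (use f in \<open>simp_all add: Lp_def\<close>)
  then have "\<forall>\<^sub>F j in sequentially. (\<integral>x. ?tail j x \<partial>\<mu>) < e"
    using e by (simp add: order_tendstoD(2))
  then obtain j where "(\<integral>x. ?tail j x \<partial>\<mu>) < e"
    by (auto simp: eventually_sequentially)
  then show ?thesis using that K(1) by blast
qed

lemma pow_translate_disjoint:
  assumes nc: "\<not> compact (closure {\<xi> [^] (n::nat) | n. n > 0})" and K: "compact K"
  obtains n :: nat where "n > 0" "\<And>x. x \<in> K \<Longrightarrow> x \<otimes> \<xi> [^] n \<notin> K"
proof -
  have "\<exists>n::nat. n > 0 \<and> (\<forall>x\<in>K. x \<otimes> \<xi> [^] n \<notin> K)"
  proof (rule ccontr)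
  assume "\<nexists>n::nat. n > 0 \<and> (\<forall>x\<in>K. x \<otimes> \<xi> [^] n \<notin> K)"
  then have meets: "\<exists>x\<in>K. x \<otimes> \<xi> [^] n \<in> K" if "n > 0" for n :: nat
    using that by blast
  let ?D = "(\<lambda>z. inv (fst z) \<otimes> snd z) ` (K \<times> K)"
  have cD: "compact ?D"
    by (intro compact_continuous_image continuous_on_subset[OF continuous_on_mult] compact_Times K
        continuous_on_inv continuous_on_fst continuous_on_snd continuous_on_id) simp
  have "{\<xi> [^] (n::nat) | n. n > 0} \<subseteq> ?D"
  proof clarify
    fix n :: nat assume "n > 0"
    then obtain x where x: "x \<in> K" "x \<otimes> \<xi> [^] n \<in> K" using meets by blast
    have "\<xi> [^] n = inv x \<otimes> (x \<otimes> \<xi> [^] n)" by (simp add: m_assoc[symmetric])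
    then show "\<xi> [^] n \<in> ?D" using x by force
  qed
  then have "closure {\<xi> [^] (n::nat) | n. n > 0} \<subseteq> ?D"
    by (rule closure_minimal[OF _ compact_imp_closed[OF cD]])
  then show False
    using nc compact_Int_closed[OF cD closed_closure, of "{\<xi> [^] (n::nat) | n. n > 0}"]
    by (simp add: Int_absorb1)
  qed
  then show ?thesis using that by blast
qed

text \<open>If \<open>f\<close> is fixed by \<open>\<pi>(a)\<close> and \<open>K a \<inter> K = {}\<close>, the mass of \<open>f\<close> on \<open>K\<close> is the
  mass of \<open>\<pi>(a)\<close> applied to the part of \<open>f\<close> outside \<open>K\<close>.\<close>

lemma integral_norm_powr_le_tail:
  fixes \<pi>0 :: "'g \<Rightarrow> ('v::{banach,second_countable_topology} \<Rightarrow>\<^sub>L 'v)"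
  assumes f: "f \<in> Lp \<mu> p" and p: "0 < p"
    and fixed: "AE x in \<mu>. f x = piL G \<pi>0 a f x"
    and M: "opnorm_Lp G \<mu> \<pi>0 p a \<le> ereal M"
    and K: "closed K" and disj: "\<And>x. x \<in> K \<Longrightarrow> x \<otimes> a \<notin> K"
  shows "(\<integral>x. norm (f x) powr p \<partial>\<mu>)
           \<le> (M powr p + 1) * (\<integral>x. norm (indicator (-K) x *\<^sub>R f x) powr p \<partial>\<mu>)"
proof -
  define u where "u x = indicator (-K) x *\<^sub>R f x" for x
  define v where "v = piL G \<pi>0 a u"
  let ?I = "\<lambda>f. \<integral>x. norm (f x) powr p \<partial>\<mu>"
  have uLp: "u \<in> Lp \<mu> p"
    unfolding u_def by (rule Lp_indicator[OF f _ p]) (use K in \<open>simp add: borel_open\<close>)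
  have v_eq: "v x = indicator (-K) (x \<otimes> a) *\<^sub>R piL G \<pi>0 a f x" for x
    by (simp add: v_def piL_def u_def blinfun.scaleR_right)
  have vLp: "v \<in> Lp \<mu> p"
  proof (rule Lp_dominated[OF f _ _ p])
    show "v \<in> borel_measurable \<mu>"
      unfolding v_def by (rule measurable_piL) (use uLp in \<open>simp add: Lp_def\<close>)
    show "AE x in \<mu>. norm (v x) \<le> norm (f x)"
      using fixed by eventually_elim (simp add: v_eq indicator_def)
  qed
  have "AE x in \<mu>. norm (f x) powr p \<le> norm (v x) powr p + norm (u x) powr p"
    using fixed by eventually_elim (use disj in \<open>auto simp: u_def v_eq indicator_def\<close>)
  then have "?I f \<le> (\<integral>x. norm (v x) powr p + norm (u x) powr p \<partial>\<mu>)"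
    by (rule integral_mono_AE[rotated 2]) (use f uLp vLp in \<open>auto simp: Lp_def\<close>)
  also have "\<dots> = ?I v + ?I u"
    using uLp vLp by (simp add: Lp_def)
  also have "?I v = Lpnorm \<mu> p v powr p" by (simp add: Lpnorm_powr[OF p])
  also have "\<dots> \<le> (M * Lpnorm \<mu> p u) powr p"
    unfolding v_def
    by (rule powr_mono2) (use p Lpnorm_nonneg Lpnorm_piL_le[OF M uLp p] in auto)
  also have "\<dots> = M powr p * ?I u"
    by (simp add: powr_mult Lpnorm_powr[OF p])
  finally show ?thesis unfolding u_def by (simp add: algebra_simps)
qed

end

subsection \<open>Cocycles\<close>

locale cocycle = lcsc_haar +
  fixes \<pi>0 :: "'g::{t2_space,second_countable_topology} \<Rightarrow> ('v::{banach,second_countable_topology} \<Rightarrow>\<^sub>L 'v)"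
    and p :: real and b :: "'g \<Rightarrow> 'g \<Rightarrow> 'v"
  assumes rep: "cont_rep G \<pi>0" and p_gt_1: "p > 1" and Z1: "Z1 G \<mu> \<pi>0 p b"
begin

lemma p_pos: "0 < p" using p_gt_1 by simp

lemma cocycle_Lp: "b g \<in> Lp \<mu> p"
  using Z1 unfolding Z1_def by blast

lemma cocycle_measurable: "b g \<in> borel_measurable \<mu>"
  using cocycle_Lp by (simp add: Lp_def)

lemma cocycle_eq: "AE h in \<mu>. b (g \<otimes> g') h = b g h + \<pi>0 g (b g' (h \<otimes> g))"
  using Z1 unfolding Z1_def piL_def by blast

lemma cocycle_one: "AE x in \<mu>. b \<one> x = 0"
proof -
  have \<pi>0_one: "\<pi>0 \<one> = id_blinfun" using rep by (simp add: cont_rep_def)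
  from cocycle_eq[of \<one> \<one>] show ?thesis by eventually_elim (simp add: \<pi>0_one)
qed

lemma Lpnorm_cocycle_one: "Lpnorm \<mu> p (b \<one>) = 0"
proof -
  have "Lpnorm \<mu> p (b \<one>) = Lpnorm \<mu> p (\<lambda>_. 0::'v)"
    by (rule Lpnorm_cong_AE) (use cocycle_measurable cocycle_one in auto)
  then show ?thesis by simp
qed

lemma cocycle_pow:
  assumes "AE x in \<mu>. b \<xi> x = 0"
  shows "AE x in \<mu>. b (\<xi> [^] (n::nat)) x = 0"
proof (induction n)
  case 0 then show ?case using cocycle_one by simp
next
  case (Suc n)
  have "AE x in \<mu>. b \<xi> (x \<otimes> \<xi> [^] n) = 0" by (rule AE_rmult[OF assms])
  with cocycle_eq[of "\<xi> [^] n" \<xi>] Suc show ?case by eventually_elim simp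
qed

text \<open>Expand \<open>b(h a) = b(a k)\<close> with \<open>a = \<xi>\<^sup>n\<close> and \<open>k = a\<^sup>-\<^sup>1 h a\<close> in both ways.\<close>

lemma cocycle_conj:
  assumes "AE x in \<mu>. b \<xi> x = 0"
  shows "AE x in \<mu>. b h x = piL G \<pi>0 (\<xi> [^] (n::nat)) (b (inv (\<xi> [^] n) \<otimes> h \<otimes> \<xi> [^] n)) x"
proof -
  define a where "a = \<xi> [^] n"
  define k where "k = inv a \<otimes> h \<otimes> a"
  have ak: "a \<otimes> k = h \<otimes> a" unfolding k_def by (simp add: m_assoc[symmetric])
  have "AE x in \<mu>. b a x = 0" unfolding a_def by (rule cocycle_pow[OF assms])
  moreover from this have "AE x in \<mu>. b a (x \<otimes> h) = 0" by (rule AE_rmult)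
  ultimately have "AE x in \<mu>. b h x = piL G \<pi>0 a (b k) x"
    using cocycle_eq[of a k] cocycle_eq[of h a] by eventually_elim (simp add: ak piL_def)
  then show ?thesis unfolding a_def k_def .
qed

lemma Lpnorm_cocycle_le_conj:
  assumes "AE x in \<mu>. b \<xi> x = 0" and "opnorm_Lp G \<mu> \<pi>0 p (\<xi> [^] n) \<le> ereal M"
  shows "Lpnorm \<mu> p (b h) \<le> M * Lpnorm \<mu> p (b (inv (\<xi> [^] (n::nat)) \<otimes> h \<otimes> \<xi> [^] n))"
proof -
  have "Lpnorm \<mu> p (b h) = Lpnorm \<mu> p (piL G \<pi>0 (\<xi> [^] n) (b (inv (\<xi> [^] n) \<otimes> h \<otimes> \<xi> [^] n)))"
    by (rule Lpnorm_cong_AE[OF cocycle_measurable measurable_piL[OF cocycle_measurable]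
          cocycle_conj[OF assms(1)]])
  also have "\<dots> \<le> M * Lpnorm \<mu> p (b (inv (\<xi> [^] n) \<otimes> h \<otimes> \<xi> [^] n))"
    by (rule Lpnorm_piL_le[OF assms(2) cocycle_Lp p_pos])
  finally show ?thesis .
qed

lemma cocycle_continuous: "((\<lambda>g. Lpnorm \<mu> p (\<lambda>x. b g x - b g0 x)) \<longlongrightarrow> 0) (at g0)"
  using Z1 unfolding Z1_def by blast

lemma isCont_Lpnorm_cocycle_one: "isCont (\<lambda>g. Lpnorm \<mu> p (b g)) \<one>"
proof -
  have "Lpnorm \<mu> p (b g) = Lpnorm \<mu> p (\<lambda>x. b g x - b \<one> x)" for g
    by (rule Lpnorm_cong_AE) (use cocycle_measurable cocycle_one in auto)
  then show ?thesis
    using cocycle_continuous[of \<one>] by (simp add: continuous_at Lpnorm_cocycle_one)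
qed

lemma cocycle_bounded_on_compact:
  assumes "compact C"
  obtains B where "\<And>g. g \<in> C \<Longrightarrow> Lpnorm \<mu> p (b g) \<le> B"
proof -
  let ?I = "\<lambda>g. \<integral>x. norm (b g x) powr p \<partial>\<mu>"
  have "\<exists>U B. open U \<and> g0 \<in> U \<and> (\<forall>g\<in>U. ?I g \<le> B)" for g0
  proof -
    let ?D = "\<lambda>g x. b g x - b g0 x"
    obtain U where U: "open U" "g0 \<in> U" "\<And>g. g \<in> U \<Longrightarrow> g \<noteq> g0 \<Longrightarrow> Lpnorm \<mu> p (?D g) < 1"
      using order_tendstoD(2)[OF cocycle_continuous[of g0], of 1]
      unfolding eventually_at_topological by auto
    have "?I g \<le> 2 powr p * (1 + ?I g0)" if "g \<in> U" for g
    proof -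
      have "Lpnorm \<mu> p (?D g) \<le> 1"
        using U(3)[OF that] by (cases "g = g0") auto
      then have "Lpnorm \<mu> p (?D g) powr p \<le> 1 powr p"
        by (intro powr_mono2) (use p_pos Lpnorm_nonneg in auto)
      then have D_le: "(\<integral>x. norm (?D g x) powr p \<partial>\<mu>) \<le> 1"
        by (simp add: Lpnorm_powr[OF p_pos])
      have "?I g \<le> 2 powr p * ((\<integral>x. norm (?D g x) powr p \<partial>\<mu>) + ?I g0)"
        using integral_norm_add_powr_le(2)[OF Lp_diff[OF cocycle_Lp[of g] cocycle_Lp[of g0] p_pos]
            cocycle_Lp[of g0] p_pos]
        by simp
      also have "\<dots> \<le> 2 powr p * (1 + ?I g0)"
        using D_le by (intro mult_left_mono add_right_mono) auto
      finally show ?thesis .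
    qed
    then show ?thesis using U(1,2) by blast
  qed
  then obtain B where "\<And>g. g \<in> C \<Longrightarrow> ?I g \<le> B"
    by (rule compact_imp_bounded_above_if_locally_bounded_above[OF assms]) blast
  then have "Lpnorm \<mu> p (b g) \<le> B powr (1/p)" if "g \<in> C" for g
    unfolding Lpnorm_def using that p_pos integral_norm_powr_nonneg by (intro powr_mono2) auto
  then show ?thesis using that by blast
qed

lemma cocycle_vanishes_on_U_set:
  assumes b\<xi>: "AE x in \<mu>. b \<xi> x = 0" and bounded: "pbounded G \<mu> \<pi>0 p \<xi>" and h: "h \<in> U_set G \<xi>"
  shows "AE x in \<mu>. b h x = 0"
proof -
  obtain M where M: "\<And>n::nat. n > 0 \<Longrightarrow> opnorm_Lp G \<mu> \<pi>0 p (\<xi> [^] n) \<le> ereal M"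
    using pbounded_obtains_opnorm_bound[OF bounded] by blast
  define k where "k n = inv (\<xi> [^] n) \<otimes> h \<otimes> \<xi> [^] n" for n :: nat
  have "k \<longlonglongrightarrow> \<one>" using h unfolding U_set_def k_def by simp
  then have "(\<lambda>n. M * Lpnorm \<mu> p (b (k n))) \<longlonglongrightarrow> M * Lpnorm \<mu> p (b \<one>)"
    by (intro tendsto_mult_left isCont_tendsto_compose[OF isCont_Lpnorm_cocycle_one])
  then have lim: "(\<lambda>n. M * Lpnorm \<mu> p (b (k n))) \<longlonglongrightarrow> 0"
    by (simp add: Lpnorm_cocycle_one)
  have le: "Lpnorm \<mu> p (b h) \<le> M * Lpnorm \<mu> p (b (k n))" if "n > 0" for n
    unfolding k_def by (rule Lpnorm_cocycle_le_conj[OF b\<xi> M[OF that]])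
  have "Lpnorm \<mu> p (b h) \<le> 0"
    by (rule LIMSEQ_le_const[OF lim]) (intro exI[of _ 1] allI impI le, simp)
  then show ?thesis by (rule AE_eq_0_if_Lpnorm_le_0[OF cocycle_Lp _ p_pos])
qed

lemma cocycle_vanishes_on_P_set:
  assumes b\<xi>: "AE x in \<mu>. b \<xi> x = 0" and contr: "contracting G \<mu> \<pi>0 p \<xi>" and h: "h \<in> P_set G \<xi>"
  shows "AE x in \<mu>. b h x = 0"
proof -
  define k where "k n = inv (\<xi> [^] n) \<otimes> h \<otimes> \<xi> [^] n" for n :: nat
  have "compact (closure {k n | n. n > 0})" using h unfolding P_set_def k_def by simp
  then obtain B0 where B0: "\<And>g. g \<in> closure {k n | n. n > 0} \<Longrightarrow> Lpnorm \<mu> p (b g) \<le> B0"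
    by (rule cocycle_bounded_on_compact) blast
  define B where "B = max B0 0"
  have B_nonneg: "0 \<le> B" by (simp add: B_def)
  have B: "Lpnorm \<mu> p (b (k n)) \<le> B" if "n > 0" for n
  proof -
    have "k n \<in> {k n | n. n > 0}" using that by blast
    then have "k n \<in> closure {k n | n. n > 0}" by (rule subsetD[OF closure_subset])
    then show ?thesis using B0 unfolding B_def by fastforce
  qed
  have "Lpnorm \<mu> p (b h) \<le> 0"
  proof (rule field_le_epsilon)
    fix e :: real assume e: "0 < e"
    define \<epsilon> where "\<epsilon> = e / (B + 1)"
    have "0 < \<epsilon>" using e B_nonneg by (simp add: \<epsilon>_def)
    then have "0 < ereal \<epsilon>" by (simp only: ereal_less(2))
    then have "\<forall>\<^sub>F n in sequentially. opnorm_Lp G \<mu> \<pi>0 p (\<xi> [^] n) < ereal \<epsilon>"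
      using contr unfolding contracting_def by (rule order_tendstoD(2)[rotated])
    then obtain N :: nat where N: "\<And>n. n \<ge> N \<Longrightarrow> opnorm_Lp G \<mu> \<pi>0 p (\<xi> [^] n) < ereal \<epsilon>"
      unfolding eventually_sequentially by blast
    have "Lpnorm \<mu> p (b h) \<le> \<epsilon> * Lpnorm \<mu> p (b (k (Suc N)))"
      unfolding k_def by (rule Lpnorm_cocycle_le_conj[OF b\<xi>]) (use N[of "Suc N"] in simp)
    also have "\<dots> \<le> \<epsilon> * B"
      using B[of "Suc N"] \<open>0 < \<epsilon>\<close> by (intro mult_left_mono) simp_all
    also have "\<dots> \<le> e" using e B_nonneg by (simp add: \<epsilon>_def field_simps)
    finally show "Lpnorm \<mu> p (b h) \<le> 0 + e" by simp
  qed
  then show ?thesis by (rule AE_eq_0_if_Lpnorm_le_0[OF cocycle_Lp _ p_pos])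
qed

lemma inv_pow_conj_eq_if_Z_set:
  assumes "h \<in> Z_set G \<xi>"
  shows "inv (\<xi> [^] (n::nat)) \<otimes> h \<otimes> \<xi> [^] n = h"
proof (induction n)
  case (Suc n)
  have "inv (\<xi> [^] Suc n) \<otimes> h \<otimes> \<xi> [^] Suc n = inv \<xi> \<otimes> (inv (\<xi> [^] n) \<otimes> h \<otimes> \<xi> [^] n) \<otimes> \<xi>"
    by (simp add: inv_mult_group m_assoc)
  then show ?case using Suc.IH assms by (simp add: Z_set_def)
qed simp

lemma cocycle_vanishes_on_Z_set:
  assumes b\<xi>: "AE x in \<mu>. b \<xi> x = 0" and bounded: "pbounded G \<mu> \<pi>0 p \<xi>" and h: "h \<in> Z_set G \<xi>"
  shows "AE x in \<mu>. b h x = 0"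
proof -
  obtain M where M: "\<And>n::nat. n > 0 \<Longrightarrow> opnorm_Lp G \<mu> \<pi>0 p (\<xi> [^] n) \<le> ereal M"
    using pbounded_obtains_opnorm_bound[OF bounded] by blast
  have escapes: "\<not> compact (closure {\<xi> [^] (n::nat) | n. n > 0})"
    using bounded by (simp add: pbounded_def)
  have fixed: "AE x in \<mu>. b h x = piL G \<pi>0 (\<xi> [^] n) (b h) x" for n :: nat
    using cocycle_conj[OF b\<xi>, of h n] by (simp add: inv_pow_conj_eq_if_Z_set[OF h])
  let ?I = "\<lambda>f. \<integral>x. norm (f x) powr p \<partial>\<mu>"
  have "?I (b h) \<le> 0"
  proof (rule field_le_epsilon)
    fix e :: real assume e: "0 < e"
    have c: "0 < M powr p + 1" by (simp add: add_nonneg_pos)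
    obtain K where K: "compact K" and tail: "?I (\<lambda>x. indicator (-K) x *\<^sub>R b h x) < e / (M powr p + 1)"
      using Lp_tail_small[OF cocycle_Lp p_pos, of "e / (M powr p + 1)"] e c by auto
    obtain n :: nat where n: "n > 0" "\<And>x. x \<in> K \<Longrightarrow> x \<otimes> \<xi> [^] n \<notin> K"
      using pow_translate_disjoint[OF escapes K] by blast
    have "?I (b h) \<le> (M powr p + 1) * ?I (\<lambda>x. indicator (-K) x *\<^sub>R b h x)"
      by (rule integral_norm_powr_le_tail[OF cocycle_Lp p_pos fixed M[OF n(1)]
            compact_imp_closed[OF K] n(2)])
    also have "\<dots> \<le> e" using tail c by (simp add: field_simps)
    finally show "?I (b h) \<le> 0 + e" by simp
  qed
  then have "?I (b h) = 0" using integral_norm_powr_nonneg[of \<mu> "b h" p] by linarith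
  then show ?thesis by (rule AE_eq_0_if_integral_norm_powr_eq_0[OF cocycle_Lp])
qed

end

theorem proposition2:
  fixes G :: "('g::{t2_space,second_countable_topology}) monoid"
    and \<mu> :: "'g measure"
    and \<pi>0 :: "'g \<Rightarrow> ('v::{banach,second_countable_topology} \<Rightarrow>\<^sub>L 'v)"
    and p :: real and \<xi> :: 'g and b :: "'g \<Rightarrow> 'g \<Rightarrow> 'v"
  assumes "lcsc_group G" and "left_haar G \<mu>" and "cont_rep G \<pi>0" and "p > 1"
    and "Z1 G \<mu> \<pi>0 p b"
    and "AE x in \<mu>. b \<xi> x = 0"
  shows "(pbounded G \<mu> \<pi>0 p \<xi> \<longrightarrow> (\<forall>h \<in> U_set G \<xi>. AE x in \<mu>. b h x = 0))
       \<and> (contracting G \<mu> \<pi>0 p \<xi> \<longrightarrow> (\<forall>h \<in> P_set G \<xi>. AE x in \<mu>. b h x = 0))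
       \<and> (pbounded G \<mu> \<pi>0 p \<xi> \<longrightarrow> (\<forall>h \<in> Z_set G \<xi>. AE x in \<mu>. b h x = 0))"
proof -
  interpret cocycle G \<mu> \<pi>0 p b
    using assms(1-5) by unfold_locales
  show ?thesis
    using cocycle_vanishes_on_U_set[OF assms(6)] cocycle_vanishes_on_P_set[OF assms(6)]
      cocycle_vanishes_on_Z_set[OF assms(6)] by blast
qed

end
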